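(* There is a universal constant $\kappa>0$ such that for all sufficiently large $T$ the following holds. For every deterministic online algorithm that, in a market with one seller and two buyers, posts in each round a single price to all three traders, there exist a seller cost $c_1=0$ and buyer values $v_1,v_2\in[0,1]$ such that the cumulative gains-from-trade regret of the algorithm over $T$ rounds is at least $\kappa\cdot\frac{\log\log T}{\log\log\log\log T}$.
   Context: Two-sided market model: sellers have fixed unknown costs $c_i\in[0,1]$, buyers fixed unknown values $v_j\in[0,1]$. In each round the learner posts prices and observes every trader's accept/reject decision; a seller accepts a price $p$ iff $p\ge c_i$, a buyer accepts a price $q$ iff $q\le v_j$ (ties in favour of accepting). A maximum-cardinality matching between accepting sellers and accepting buyers is formed; the gains-from-trade (GFT) of a matching $M$ is $\sum_{(i,j)\in M}(v_j-c_i)$. Benchmark: $\mathrm{GFT}^\star$, the maximum GFT over all matchings between sellers and buyers. Round-$t$ regret is $\mathrm{GFT}^\star$ minus the minimum GFT over all maximum-cardinality matchings of the traders accepting in round $t$ (worst-case matching rule); the cumulative regret is the sum over $t=1,\dots,T$. A single-price mechanism posts one common price to all traders. *)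

theory Defs
  imports Complex_Main
begin

text \<open>Two-sided market: sellers indexed by i < n with costs c i,
 buyers indexed by j < m with values v j.\<close>

definition matchings_between :: "nat set \<Rightarrow> nat set \<Rightarrow> (nat \<times> nat) set set" where
  "matchings_between S B =
     {M. M \<subseteq> S \<times> B \<and> (\<forall>(i,j)\<in>M. \<forall>(i',j')\<in>M. (i = i' \<longleftrightarrow> j = j'))}"

definition max_card_matchings :: "nat set \<Rightarrow> nat set \<Rightarrow> (nat \<times> nat) set set" where
  "max_card_matchings S B =
     {M \<in> matchings_between S B. \<forall>M' \<in> matchings_between S B. card M' \<le> card M}"

definition gft :: "(nat \<Rightarrow> real) \<Rightarrow> (nat \<Rightarrow> real) \<Rightarrow> (nat \<times> nat) set \<Rightarrow> real" where
  "gft c v M = (\<Sum>(i,j)\<in>M. v j - c i)"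

definition opt_gft :: "(nat \<Rightarrow> real) \<Rightarrow> (nat \<Rightarrow> real) \<Rightarrow> nat \<Rightarrow> nat \<Rightarrow> real" where
  "opt_gft c v n m = Max (gft c v ` matchings_between {..<n} {..<m})"

definition round_gft :: "(nat \<Rightarrow> real) \<Rightarrow> (nat \<Rightarrow> real) \<Rightarrow> nat set \<Rightarrow> nat set \<Rightarrow> real" where
  "round_gft c v S B = Min (gft c v ` max_card_matchings S B)"

text \<open>Feedback of one round: accept decisions of every seller and every buyer.\<close>
type_synonym feedback = "(nat \<Rightarrow> bool) \<times> (nat \<Rightarrow> bool)"

text \<open>A deterministic single-price algorithm maps the history of feedback to the
 common price posted in the next round.\<close>
type_synonym sp_alg = "feedback list \<Rightarrow> real"

definition accepting_sellers :: "(nat \<Rightarrow> real) \<Rightarrow> nat \<Rightarrow> real \<Rightarrow> nat set" where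
  "accepting_sellers c n p = {i. i < n \<and> c i \<le> p}"

definition accepting_buyers :: "(nat \<Rightarrow> real) \<Rightarrow> nat \<Rightarrow> real \<Rightarrow> nat set" where
  "accepting_buyers v m p = {j. j < m \<and> p \<le> v j}"

definition feedback_of :: "(nat \<Rightarrow> real) \<Rightarrow> (nat \<Rightarrow> real) \<Rightarrow> nat \<Rightarrow> nat \<Rightarrow> real \<Rightarrow> feedback" where
  "feedback_of c v n m p = ((\<lambda>i. i \<in> accepting_sellers c n p), (\<lambda>j. j \<in> accepting_buyers v m p))"

fun history :: "sp_alg \<Rightarrow> (nat \<Rightarrow> real) \<Rightarrow> (nat \<Rightarrow> real) \<Rightarrow> nat \<Rightarrow> nat \<Rightarrow> nat \<Rightarrow> feedback list" where
  "history A c v n m 0 = []"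
| "history A c v n m (Suc t) =
     history A c v n m t @ [feedback_of c v n m (A (history A c v n m t))]"

text \<open>Price posted in round t (rounds numbered from 0).\<close>
definition price :: "sp_alg \<Rightarrow> (nat \<Rightarrow> real) \<Rightarrow> (nat \<Rightarrow> real) \<Rightarrow> nat \<Rightarrow> nat \<Rightarrow> nat \<Rightarrow> real" where
  "price A c v n m t = A (history A c v n m t)"

definition regret :: "sp_alg \<Rightarrow> (nat \<Rightarrow> real) \<Rightarrow> (nat \<Rightarrow> real) \<Rightarrow> nat \<Rightarrow> nat \<Rightarrow> nat \<Rightarrow> real" where
  "regret A c v n m T =
     (\<Sum>t<T. opt_gft c v n m
        - round_gft c v (accepting_sellers c n (price A c v n m t))
                        (accepting_buyers v m (price A c v n m t)))"

end

theory Submission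
  imports Defs "HOL-Real_Asymp.Real_Asymp"
begin

text \<open>Take the seller's cost 0 and buyer values \<open>1/2 \<le> v 0 \<le> v 1 \<le> 1\<close>. A price
\<open>p \<le> v 0\<close> makes both buyers accept and the worst-case matching trades with buyer 0,
losing \<open>v 1 - v 0\<close>; a price above \<open>v 1\<close> makes both reject, losing \<open>v 1 \<ge> 1/2\<close>.
The adversary answers every price with one of these two outcomes ("low" and "high"),
consistently with an interval \<open>[lo, hi]\<close>, and at the end sets \<open>v 0 = lo\<close> and
\<open>v 1 = (lo + hi) / 2\<close>. It answers low unless \<open>p\<close> exceeds \<open>lo\<close> by the threshold
\<open>\<phi> (r + 1)\<close>, where \<open>r\<close> counts the high answers that cut \<open>hi\<close> down and
\<open>\<phi> (r + 1) = \<phi> r\<^sup>2 / (16 K)\<close> decays doubly exponentially. Either there are \<open>K\<close> high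
answers, costing \<open>K / 2\<close>, or \<open>r < K\<close> throughout and the potential
\<open>(#low) * \<phi> r\<close> passes \<open>4 K\<close> within \<open>(32 K) ^ 2 ^ K\<close> rounds. When it does, the width
bound \<open>hi - lo \<ge> \<phi> r - (#low) * \<phi> (r + 1)\<close> forces \<open>(#low) * (hi - lo) \<ge> 2 K\<close>, so
the low answers cost \<open>K\<close>. Taking \<open>K \<approx> ln (ln T) / 4\<close> gives regret at least
\<open>ln (ln T) / 8\<close>.\<close>

section \<open>Worst-case gains from trade\<close>

lemma finite_matchings_between:
  "finite S \<Longrightarrow> finite B \<Longrightarrow> finite (matchings_between S B)"
  by (rule finite_subset[of _ "Pow (S \<times> B)"]) (auto simp: matchings_between_def)

lemma empty_in_matchings_between: "{} \<in> matchings_between S B"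
  by (simp add: matchings_between_def)

lemma matchings_between_mono:
  "S \<subseteq> S' \<Longrightarrow> B \<subseteq> B' \<Longrightarrow> matchings_between S B \<subseteq> matchings_between S' B'"
  by (auto simp: matchings_between_def)

lemma card_matching_le:
  assumes "M \<in> matchings_between S B" and "finite S"
  shows "card M \<le> card S"
proof (rule card_inj_on_le)
  show "inj_on fst M"
    using assms(1) by (fastforce simp: matchings_between_def inj_on_def)
  show "fst ` M \<subseteq> S"
    using assms(1) by (auto simp: matchings_between_def)
qed (fact assms(2))

lemma max_card_matchings_nonempty:
  assumes "finite S" "finite B"
  shows "max_card_matchings S B \<noteq> {}"
proof -
  let ?X = "matchings_between S B"
  have fin: "finite (card ` ?X)"
    using finite_matchings_between[OF assms] by simp
  obtain M where "M \<in> ?X" "card M = Max (card ` ?X)"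
    using Max_in[OF fin] empty_in_matchings_between by (metis empty_iff image_iff)
  then have "M \<in> max_card_matchings S B"
    using Max_ge[OF fin] by (auto simp: max_card_matchings_def)
  then show ?thesis by blast
qed

lemma round_gft_le_gft:
  assumes "finite S" "finite B" "M \<in> max_card_matchings S B"
  shows "round_gft c v S B \<le> gft c v M"
proof -
  have "finite (max_card_matchings S B)"
    using finite_matchings_between[OF assms(1,2)]
    by (rule finite_subset[rotated]) (auto simp: max_card_matchings_def)
  then show ?thesis
    unfolding round_gft_def using assms(3) by (intro Min_le) auto
qed

lemma gft_le_opt_gft:
  "M \<in> matchings_between {..<n} {..<m} \<Longrightarrow> gft c v M \<le> opt_gft c v n m"
  unfolding opt_gft_def using finite_matchings_between[of "{..<n}" "{..<m}"]
  by (intro Max_ge) auto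

lemma pair_gft_le_opt_gft: "i < n \<Longrightarrow> j < m \<Longrightarrow> v j - c i \<le> opt_gft c v n m"
  using gft_le_opt_gft[of "{(i, j)}" n m c v] by (simp add: matchings_between_def gft_def)

lemma round_gft_le_opt_gft:
  assumes "S \<subseteq> {..<n}" "B \<subseteq> {..<m}"
  shows "round_gft c v S B \<le> opt_gft c v n m"
proof -
  have fin: "finite S" "finite B"
    using assms finite_subset by auto
  obtain M where M: "M \<in> max_card_matchings S B"
    using max_card_matchings_nonempty[OF fin] by blast
  then have "M \<in> matchings_between {..<n} {..<m}"
    using matchings_between_mono[OF assms] by (auto simp: max_card_matchings_def)
  then show ?thesis
    using round_gft_le_gft[OF fin M, of c v] gft_le_opt_gft[of M n m c v] by linarith
qed

lemma round_gft_no_trade: "S = {} \<or> B = {} \<Longrightarrow> round_gft c v S B = 0"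
  by (auto simp: round_gft_def max_card_matchings_def matchings_between_def gft_def)

lemma singleton_in_max_card_matchings:
  assumes "i \<in> S" "card S = 1" "j \<in> B"
  shows "{(i, j)} \<in> max_card_matchings S B"
proof -
  have "finite S"
    using assms(2) card.infinite by fastforce
  have "card M \<le> card {(i, j)}" if "M \<in> matchings_between S B" for M
    using card_matching_le[OF that \<open>finite S\<close>] assms(2) by simp
  moreover have "{(i, j)} \<in> matchings_between S B"
    using assms by (auto simp: matchings_between_def)
  ultimately show ?thesis
    by (simp add: max_card_matchings_def)
qed

definition trade_loss :: "(nat \<Rightarrow> real) \<Rightarrow> (nat \<Rightarrow> real) \<Rightarrow> nat \<Rightarrow> nat \<Rightarrow> real \<Rightarrow> real" where
  "trade_loss c v n m p =
     opt_gft c v n m - round_gft c v (accepting_sellers c n p) (accepting_buyers v m p)"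

lemma finite_accepting_sellers [simp]: "finite (accepting_sellers c n p)"
  by (simp add: accepting_sellers_def)

lemma finite_accepting_buyers [simp]: "finite (accepting_buyers v m p)"
  by (simp add: accepting_buyers_def)

lemma regret_eq_sum_trade_loss:
  "regret A c v n m T = (\<Sum>t<T. trade_loss c v n m (price A c v n m t))"
  by (simp add: regret_def trade_loss_def)

lemma trade_loss_nonneg: "0 \<le> trade_loss c v n m p"
  unfolding trade_loss_def
  by (simp add: round_gft_le_opt_gft accepting_sellers_def accepting_buyers_def subset_eq)

lemma trade_loss_no_trade:
  "accepting_sellers c n p = {} \<or> accepting_buyers v m p = {} \<Longrightarrow>
   trade_loss c v n m p = opt_gft c v n m"
  by (simp add: trade_loss_def round_gft_no_trade)

lemma trade_loss_ge_value_gap: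
  assumes "p \<le> v 0" "0 \<le> v 0" "v 0 \<le> v 1"
  shows "v 1 - v 0 \<le> trade_loss (\<lambda>_. 0) v 1 2 p"
proof (cases "0 \<le> p")
  case True
  let ?S = "accepting_sellers (\<lambda>_. 0) 1 p" and ?B = "accepting_buyers v 2 p"
  have S: "?S = {0}" and "0 \<in> ?B"
    using True assms(1) by (auto simp: accepting_sellers_def accepting_buyers_def)
  then have "{(0, 0)} \<in> max_card_matchings ?S ?B"
    by (intro singleton_in_max_card_matchings) auto
  then have "round_gft (\<lambda>_. 0) v ?S ?B \<le> v 0"
    using round_gft_le_gft[of ?S ?B "{(0, 0)}" "\<lambda>_. 0" v]
    by (simp add: S gft_def accepting_buyers_def)
  then show ?thesis
    using pair_gft_le_opt_gft[of 0 1 1 2 v "\<lambda>_. 0"] by (simp add: trade_loss_def)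
next
  case False
  then show ?thesis
    using trade_loss_no_trade[of "\<lambda>_. 0" 1 p v 2] pair_gft_le_opt_gft[of 0 1 1 2 v "\<lambda>_. 0"]
      assms
    by (simp add: accepting_sellers_def)
qed

lemma trade_loss_ge_high_value:
  assumes "v 0 < p" "v 1 < p"
  shows "v 1 \<le> trade_loss (\<lambda>_. 0) v 1 2 p"
proof -
  have "v j < p" if "j < 2" for j
    using that assms by (cases j) auto
  then have "accepting_buyers v 2 p = {}"
    by (auto simp: accepting_buyers_def not_le[symmetric])
  then show ?thesis
    using trade_loss_no_trade pair_gft_le_opt_gft[of 0 1 1 2 v "\<lambda>_. 0"] by simp
qed

section \<open>An adaptive adversary\<close>

definition uniform_feedback :: "real \<Rightarrow> bool \<Rightarrow> feedback" where
  "uniform_feedback p b = ((\<lambda>i. i < 1 \<and> 0 \<le> p), (\<lambda>j. j < 2 \<and> b))"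

lemma feedback_of_uniform:
  assumes "v 0 \<le> v 1" and "(b \<and> p \<le> v 0) \<or> (\<not> b \<and> v 1 < p)"
  shows "feedback_of (\<lambda>_. 0) v 1 2 p = uniform_feedback p b"
proof -
  have "(j < 2 \<and> p \<le> v j) \<longleftrightarrow> (j < 2 \<and> b)" for j :: nat
    using assms by (cases j) (auto simp: less_Suc_eq)
  then show ?thesis
    by (auto simp: feedback_of_def uniform_feedback_def accepting_sellers_def accepting_buyers_def)
qed

datatype adv_state =
  State (hist: "feedback list") (lo: real) (hi: real) (lows: nat) (highs: nat) (cuts: nat)

definition answers_low :: "(nat \<Rightarrow> real) \<Rightarrow> adv_state \<Rightarrow> real \<Rightarrow> bool" where
  "answers_low \<phi> s p \<longleftrightarrow> p \<le> lo s \<or> (p < hi s \<and> p - lo s < \<phi> (Suc (cuts s)))"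

definition adv_step :: "(nat \<Rightarrow> real) \<Rightarrow> adv_state \<Rightarrow> real \<Rightarrow> adv_state" where
  "adv_step \<phi> s p =
     (if answers_low \<phi> s p
      then State (hist s @ [uniform_feedback p True]) (max (lo s) p) (hi s)
             (Suc (lows s)) (highs s) (cuts s)
      else State (hist s @ [uniform_feedback p False]) (lo s) (min (hi s) p)
             (lows s) (Suc (highs s)) (if p < hi s then Suc (cuts s) else cuts s))"

lemma adv_step_sel [simp]:
  "hist (adv_step \<phi> s p) = hist s @ [uniform_feedback p (answers_low \<phi> s p)]"
  "lo (adv_step \<phi> s p) = (if answers_low \<phi> s p then max (lo s) p else lo s)"
  "hi (adv_step \<phi> s p) = (if answers_low \<phi> s p then hi s else min (hi s) p)"
  "lows (adv_step \<phi> s p) = (if answers_low \<phi> s p then Suc (lows s) else lows s)"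
  "highs (adv_step \<phi> s p) = (if answers_low \<phi> s p then highs s else Suc (highs s))"
  "cuts (adv_step \<phi> s p) = (if answers_low \<phi> s p \<or> hi s \<le> p then cuts s else Suc (cuts s))"
  by (simp_all add: adv_step_def)

primrec adv_run :: "sp_alg \<Rightarrow> (nat \<Rightarrow> real) \<Rightarrow> nat \<Rightarrow> adv_state" where
  "adv_run A \<phi> 0 = State [] (1/2) 1 0 0 0"
| "adv_run A \<phi> (Suc t) = adv_step \<phi> (adv_run A \<phi> t) (A (hist (adv_run A \<phi> t)))"

locale threshold_adversary =
  fixes A :: sp_alg and \<phi> :: "nat \<Rightarrow> real"
  assumes threshold_pos: "0 < \<phi> h"
    and threshold_0_le: "\<phi> 0 \<le> 1/2"
begin

abbreviation state :: "nat \<Rightarrow> adv_state" where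
  "state \<equiv> adv_run A \<phi>"

abbreviation posted :: "nat \<Rightarrow> real" where
  "posted t \<equiv> A (hist (state t))"

abbreviation low :: "nat \<Rightarrow> bool" where
  "low t \<equiv> answers_low \<phi> (state t) (posted t)"

lemma interval_bounds: "1/2 \<le> lo (state t) \<and> lo (state t) < hi (state t) \<and> hi (state t) \<le> 1"
proof (induction t)
  case (Suc t)
  show ?case
  proof (cases "low t")
    case True
    then have "posted t < hi (state t) \<or> posted t \<le> lo (state t)"
      by (auto simp: answers_low_def)
    then show ?thesis
      using Suc True by auto
  next
    case False
    then have "lo (state t) < posted t"
      using threshold_pos[of "Suc (cuts (state t))"] by (auto simp: answers_low_def)
    then show ?thesis
      using Suc False by auto
  qed
qed simp

lemma lows_add_highs: "lows (state t) + highs (state t) = t"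
  by (induction t) auto

lemma cuts_le_highs: "cuts (state t) \<le> highs (state t)"
  by (induction t) auto

lemma interval_shrinks:
  assumes "t \<le> t'"
  shows "lo (state t) \<le> lo (state t') \<and> hi (state t') \<le> hi (state t)"
  using assms
proof (induction t' rule: dec_induct)
  case (step n)
  then show ?case
    by (cases "low n") auto
qed simp

lemma later_interval_respects_answer:
  assumes "t < t'"
  shows "(low t \<longrightarrow> posted t \<le> lo (state t')) \<and> (\<not> low t \<longrightarrow> hi (state t') \<le> posted t)"
  using interval_shrinks[of "Suc t" t'] assms
  by (cases "low t") auto

lemma width_lower_bound:
  "\<phi> (cuts (state t)) - real (lows (state t)) * \<phi> (Suc (cuts (state t)))
     \<le> hi (state t) - lo (state t)"
proof (induction t)
  case 0
  then show ?case
    using threshold_0_le by simp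
next
  case (Suc t)
  let ?s = "state t"
  show ?case
  proof (cases "low t")
    case True
    have "lo (state (Suc t)) \<le> lo ?s + \<phi> (Suc (cuts ?s))"
      using True threshold_pos[of "Suc (cuts ?s)"] by (auto simp: answers_low_def)
    moreover have "hi (state (Suc t)) = hi ?s"
      using True by simp
    moreover have "real (lows (state (Suc t))) * \<phi> (Suc (cuts (state (Suc t))))
        = real (lows ?s) * \<phi> (Suc (cuts ?s)) + \<phi> (Suc (cuts ?s))"
      and "\<phi> (cuts (state (Suc t))) = \<phi> (cuts ?s)"
      using True by (simp_all add: algebra_simps)
    ultimately show ?thesis
      using Suc.IH by linarith
  next
    case high: False
    show ?thesis
    proof (cases "posted t < hi ?s")
      case True
      then have "\<phi> (Suc (cuts ?s)) \<le> posted t - lo ?s"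
        using high by (auto simp: answers_low_def)
      moreover have "0 \<le> real (lows ?s) * \<phi> (Suc (Suc (cuts ?s)))"
        using threshold_pos[of "Suc (Suc (cuts ?s))"] by simp
      ultimately show ?thesis
        using True high by simp
    next
      case False
      then show ?thesis
        using Suc high by simp
    qed
  qed
qed

definition adv_values :: "nat \<Rightarrow> nat \<Rightarrow> real" where
  "adv_values ts j = (if j = 0 then lo (state ts) else (lo (state ts) + hi (state ts)) / 2)"

lemma adv_values_0: "adv_values ts 0 = lo (state ts)"
  by (simp add: adv_values_def)

lemma adv_values_gap: "adv_values ts 1 - adv_values ts 0 = (hi (state ts) - lo (state ts)) / 2"
  by (simp add: adv_values_def)

lemma adv_values_bounds:
  "1/2 \<le> adv_values ts 0" "adv_values ts 0 \<le> adv_values ts 1"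
  "adv_values ts 1 < hi (state ts)" "adv_values ts 1 \<le> 1"
  using interval_bounds[of ts] by (auto simp: adv_values_def)

lemma history_adv_values:
  "t \<le> ts \<Longrightarrow> history A (\<lambda>_. 0) (adv_values ts) 1 2 t = hist (state t)"
proof (induction t)
  case (Suc t)
  have "feedback_of (\<lambda>_. 0) (adv_values ts) 1 2 (posted t) = uniform_feedback (posted t) (low t)"
    using later_interval_respects_answer[of t ts] Suc.prems
      adv_values_0[of ts] adv_values_bounds[of ts]
    by (intro feedback_of_uniform) force+
  then show ?case
    using Suc by simp
qed simp

lemma trade_loss_ge_adv_values:
  assumes "t < ts"
  shows "(if low t then adv_values ts 1 - adv_values ts 0 else adv_values ts 1)
    \<le> trade_loss (\<lambda>_. 0) (adv_values ts) 1 2 (price A (\<lambda>_. 0) (adv_values ts) 1 2 t)"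
proof -
  have "price A (\<lambda>_. 0) (adv_values ts) 1 2 t = posted t"
    using history_adv_values[of t ts] assms by (simp add: price_def)
  then show ?thesis
    using later_interval_respects_answer[OF assms] adv_values_0[of ts] adv_values_bounds[of ts]
      trade_loss_ge_value_gap[of "posted t" "adv_values ts"]
      trade_loss_ge_high_value[of "adv_values ts" "posted t"]
    by auto
qed

lemma regret_ge_adv_counts:
  assumes "ts \<le> T"
  shows "real (lows (state ts)) * ((hi (state ts) - lo (state ts)) / 2) + real (highs (state ts)) / 2
    \<le> regret A (\<lambda>_. 0) (adv_values ts) 1 2 T"
proof -
  let ?v = "adv_values ts"
  let ?loss = "\<lambda>t. trade_loss (\<lambda>_. 0) ?v 1 2 (price A (\<lambda>_. 0) ?v 1 2 t)"
  have partial_sums: "t \<le> ts \<Longrightarrow>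
    real (lows (state t)) * (?v 1 - ?v 0) + real (highs (state t)) * ?v 1 \<le> (\<Sum>i<t. ?loss i)" for t
  proof (induction t)
    case (Suc t)
    then show ?case
      using trade_loss_ge_adv_values[of t ts]
      by (cases "low t") (auto simp: algebra_simps)
  qed simp
  have "real (highs (state ts)) * (1/2) \<le> real (highs (state ts)) * ?v 1"
    using adv_values_bounds(1,2)[of ts] by (intro mult_left_mono) auto
  moreover have "(\<Sum>i<ts. ?loss i) \<le> (\<Sum>i<T. ?loss i)"
    using assms by (intro sum_mono2) (auto simp: trade_loss_nonneg)
  moreover have "real (lows (state ts)) * ((hi (state ts) - lo (state ts)) / 2)
      = real (lows (state ts)) * (?v 1 - ?v 0)"
    using adv_values_gap[of ts] by simp
  ultimately show ?thesis
    using partial_sums[OF order_refl] unfolding regret_eq_sum_trade_loss by linarith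
qed

end

section \<open>Doubly exponentially decaying thresholds\<close>

definition cut_threshold :: "nat \<Rightarrow> nat \<Rightarrow> real" where
  "cut_threshold K h = 16 * real K / (32 * real K) ^ 2 ^ h"

lemma cut_threshold_Suc: "cut_threshold K (Suc h) = (cut_threshold K h)\<^sup>2 / (16 * real K)"
proof -
  have "(32 * real K) ^ 2 ^ Suc h = ((32 * real K) ^ 2 ^ h)\<^sup>2"
    by (simp only: power_Suc2 power_mult)
  then show ?thesis
    by (cases "K = 0") (simp_all add: cut_threshold_def power2_eq_square)
qed

lemma cut_threshold_antimono:
  assumes "1 \<le> K" "h \<le> h'"
  shows "cut_threshold K h' \<le> cut_threshold K h"
proof -
  have "(32 * real K) ^ 2 ^ h \<le> (32 * real K) ^ 2 ^ h'"
    using assms by (intro power_increasing) auto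
  then show ?thesis
    unfolding cut_threshold_def using assms(1) by (intro divide_left_mono) auto
qed

lemma threshold_adversary_cut_threshold:
  assumes "1 \<le> K"
  shows "threshold_adversary (cut_threshold K)"
proof
  show "0 < cut_threshold K h" for h
    using assms by (simp add: cut_threshold_def)
  show "cut_threshold K 0 \<le> 1/2"
    using assms by (simp add: cut_threshold_def)
qed

lemma wide_when_potential_crosses:
  fixes K n f g :: real
  assumes "0 < K" "0 \<le> n" "4 * K \<le> (n + 1) * f" "(n + 1) * f \<le> 8 * K"
    and "f - (n + 1) * (f\<^sup>2 / (16 * K)) \<le> g"
  shows "2 * K \<le> (n + 1) * g"
proof -
  define X where "X = (n + 1) * f"
  have "X * (1/2) \<le> X * (1 - X / (16 * K))"
    using assms(1,3,4) by (intro mult_left_mono) (auto simp: X_def field_simps)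
  also have "\<dots> = (n + 1) * (f - (n + 1) * (f\<^sup>2 / (16 * K)))"
    by (simp add: X_def power2_eq_square algebra_simps)
  also have "\<dots> \<le> (n + 1) * g"
    using assms(2,5) by (intro mult_left_mono) auto
  finally show ?thesis
    using assms(3) by (simp add: X_def)
qed

context
  fixes A :: sp_alg and K :: nat
  assumes K_pos: "1 \<le> K"
begin

interpretation threshold_adversary A "cut_threshold K"
  using K_pos by (rule threshold_adversary_cut_threshold)

abbreviation wide :: "nat \<Rightarrow> bool" where
  "wide t \<equiv> 2 * real K \<le> real (lows (state t)) * (hi (state t) - lo (state t))"

lemma potential_small_until_wide:
  "(\<exists>t'\<le>t. wide t') \<or> real (lows (state t)) * cut_threshold K (cuts (state t)) < 4 * real K"
proof (induction t)
  case 0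
  then show ?case
    using K_pos by simp
next
  case (Suc t)
  let ?s = "state t" and ?s' = "state (Suc t)"
  consider (wide) "\<exists>t'\<le>t. wide t'" | (small) "real (lows ?s) * cut_threshold K (cuts ?s) < 4 * real K"
    using Suc.IH by blast
  then show ?case
  proof cases
    case wide
    then show ?thesis
      using le_SucI by blast
  next
    case small
    show ?thesis
    proof (cases "low t")
      case is_low: True
      let ?f = "cut_threshold K (cuts ?s)" and ?n = "real (lows ?s)"
      have step: "lows ?s' = Suc (lows ?s)" "cuts ?s' = cuts ?s"
        using is_low by simp_all
      have "?f \<le> 1/2"
        using order_trans[OF cut_threshold_antimono[OF K_pos le0] threshold_0_le] .
      then have below_8K: "(?n + 1) * ?f < 8 * real K"
        using small K_pos by (simp add: algebra_simps)
      have width: "?f - (?n + 1) * (?f\<^sup>2 / (16 * real K)) \<le> hi ?s' - lo ?s'"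
        using width_lower_bound[of "Suc t"] is_low
        by (simp only: step cut_threshold_Suc) (simp add: algebra_simps)
      show ?thesis
      proof (cases "wide (Suc t)")
        case True
        then show ?thesis
          by blast
      next
        case False
        have "\<not> 4 * real K \<le> (?n + 1) * ?f"
        proof
          assume "4 * real K \<le> (?n + 1) * ?f"
          then have "2 * real K \<le> (?n + 1) * (hi ?s' - lo ?s')"
            using K_pos below_8K width by (intro wide_when_potential_crosses) auto
          then show False
            using False is_low by (simp add: add.commute)
        qed
        then show ?thesis
          using is_low by (simp add: add.commute)
      qed
    next
      case False
      then have "lows ?s' = lows ?s" "cuts ?s \<le> cuts ?s'"
        by simp_all
      then have "real (lows ?s') * cut_threshold K (cuts ?s') \<le> real (lows ?s) * cut_threshold K (cuts ?s)"
        using cut_threshold_antimono[OF K_pos] by (simp add: mult_left_mono)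
      then show ?thesis
        using small by linarith
    qed
  qed
qed

lemma exists_values_regret_ge_half_scale:
  assumes horizon: "real ((32 * K) ^ 2 ^ K) \<le> real T / 2"
  shows "\<exists>v. v 0 \<in> {0..1} \<and> v 1 \<in> {0..1} \<and> real K / 2 \<le> regret A (\<lambda>_. 0) v 1 2 T"
proof -
  have "\<exists>ts\<le>T. real K / 2 \<le> regret A (\<lambda>_. 0) (adv_values ts) 1 2 T"
  proof (cases "K \<le> highs (state T)")
    case True
    have "0 \<le> real (lows (state T)) * ((hi (state T) - lo (state T)) / 2)"
      using interval_bounds[of T] by simp
    then show ?thesis
      using regret_ge_adv_counts[of T T] True by (intro exI[of _ T]) auto
  next
    case False
    define P where "P = (32 * real K) ^ 2 ^ K"
    have "K \<le> 32 * K"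
      by simp
    also have "\<dots> \<le> (32 * K) ^ 2 ^ K"
      using K_pos by (intro self_le_power) auto
    finally have "real K \<le> real ((32 * K) ^ 2 ^ K)"
      by (simp only: of_nat_le_iff)
    then have KT: "real K \<le> real T / 2"
      using horizon by linarith
    have "0 < P"
      using K_pos by (simp add: P_def)
    have "P \<le> 4 * (real T - real K)"
      using horizon KT unfolding P_def by simp
    then have "4 * real K * P \<le> 4 * real K * (4 * (real T - real K))"
      by (rule mult_left_mono) simp
    moreover have threshold_K: "cut_threshold K K = 16 * real K / P"
      by (simp add: cut_threshold_def P_def)
    ultimately have "4 * real K \<le> (real T - real K) * cut_threshold K K"
      unfolding threshold_K using \<open>0 < P\<close> by (simp add: field_simps)
    also have "\<dots> \<le> real (lows (state T)) * cut_threshold K (cuts (state T))"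
    proof (rule mult_mono)
      show "real T - real K \<le> real (lows (state T))"
        using False lows_add_highs[of T] by linarith
      show "cut_threshold K K \<le> cut_threshold K (cuts (state T))"
        using False cuts_le_highs[of T] by (intro cut_threshold_antimono K_pos) linarith
      show "0 \<le> real (lows (state T))"
        by simp
      show "0 \<le> cut_threshold K K"
        using threshold_pos less_imp_le by blast
    qed
    finally obtain t' where "t' \<le> T" "wide t'"
      using potential_small_until_wide[of T] by auto
    then show ?thesis
      using regret_ge_adv_counts[of t' T] by (intro exI[of _ t']) auto
  qed
  then obtain ts where "real K / 2 \<le> regret A (\<lambda>_. 0) (adv_values ts) 1 2 T"
    by blast
  then show ?thesis
    using adv_values_bounds[of ts] by (intro exI[of _ "adv_values ts"]) auto
qed

end

section \<open>Choice of the scale\<close>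

lemma scaled_tower_le_pow2:
  assumes "3 \<le> K"
  shows "(32 * K) ^ 2 ^ K \<le> (2::nat) ^ 4 ^ K"
proof -
  have "K + 5 \<le> 2 ^ K"
    using assms by (induction K rule: dec_induct) simp_all
  have "32 * K \<le> 2 ^ (K + 5)"
    using less_exp[of K] by (simp add: power_add)
  then have "(32 * K) ^ 2 ^ K \<le> (2 ^ (K + 5)) ^ 2 ^ K"
    by (rule power_mono) simp
  also have "\<dots> = 2 ^ ((K + 5) * 2 ^ K)"
    by (simp add: power_mult)
  also have "\<dots> \<le> 2 ^ (2 ^ K * 2 ^ K)"
    using \<open>K + 5 \<le> 2 ^ K\<close> by (intro power_increasing) auto
  also have "2 ^ K * 2 ^ K = (4::nat) ^ K"
    by (simp flip: power_mult_distrib)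
  finally show ?thesis .
qed

lemma four_pow_ceiling_le_sqrt:
  fixes y :: real
  assumes "1 \<le> y"
  shows "4 ^ nat \<lceil>ln y / 4\<rceil> \<le> 4 * sqrt y"
proof -
  have "0 \<le> ln y"
    using assms by simp
  then have "real (nat \<lceil>ln y / 4\<rceil>) \<le> ln y / 4 + 1"
    by linarith
  have "ln (4::real) \<le> 2"
    using ln_2_less_1 ln_realpow[of 2 2] by simp
  have "(4::real) ^ nat \<lceil>ln y / 4\<rceil> = 4 powr real (nat \<lceil>ln y / 4\<rceil>)"
    by (simp add: powr_realpow)
  also have "\<dots> \<le> 4 powr (ln y / 4 + 1)"
    using \<open>real (nat \<lceil>ln y / 4\<rceil>) \<le> ln y / 4 + 1\<close> by (intro powr_mono) auto
  also have "\<dots> = 4 powr (ln y / 4) * 4"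
    by (simp add: powr_add)
  also have "4 powr (ln y / 4) = y powr (ln 4 / 4)"
    using assms by (simp add: powr_def)
  also have "y powr (ln 4 / 4) * 4 \<le> y powr (1/2) * 4"
    using assms \<open>ln 4 \<le> 2\<close> by (intro mult_right_mono powr_mono) auto
  finally show ?thesis
    using assms by (simp add: powr_half_sqrt)
qed

definition lnln_scale :: "nat \<Rightarrow> nat" where
  "lnln_scale T = nat \<lceil>ln (ln (real T)) / 4\<rceil>"

lemma eventually_lnln_scale:
  "\<forall>\<^sub>F T in sequentially. 1 \<le> lnln_scale T
     \<and> real ((32 * lnln_scale T) ^ 2 ^ lnln_scale T) \<le> real T / 2
     \<and> ln (ln (real T)) / ln (ln (ln (ln (real T)))) \<le> 4 * real (lnln_scale T)"
proof -
  have "\<forall>\<^sub>F T in sequentially. 1 \<le> ln (real T)" by real_asymp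
  moreover have "\<forall>\<^sub>F T in sequentially. 12 \<le> ln (ln (real T))" by real_asymp
  moreover have "\<forall>\<^sub>F T in sequentially. 1 \<le> ln (ln (ln (ln (real T))))" by real_asymp
  moreover have "\<forall>\<^sub>F T in sequentially. 2 powr (4 * sqrt (ln (real T))) \<le> real T / 2"
    by real_asymp
  ultimately show ?thesis
  proof eventually_elim
    case (elim T)
    define K where "K = lnln_scale T"
    have "3 \<le> K"
      using elim(2) unfolding K_def lnln_scale_def by linarith
    have "real ((32 * K) ^ 2 ^ K) \<le> real ((2::nat) ^ 4 ^ K)"
      using scaled_tower_le_pow2[OF \<open>3 \<le> K\<close>] by (simp only: of_nat_le_iff)
    also have "\<dots> = 2 powr real (4 ^ K)"
      by (metis of_nat_numeral of_nat_power powr_realpow zero_less_numeral)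
    also have "\<dots> \<le> 2 powr (4 * sqrt (ln (real T)))"
      using four_pow_ceiling_le_sqrt[OF elim(1)] by (simp add: K_def lnln_scale_def)
    finally have "real ((32 * K) ^ 2 ^ K) \<le> real T / 2"
      using elim(4) by linarith
    moreover have "ln (ln (real T)) / ln (ln (ln (ln (real T)))) \<le> ln (ln (real T)) / 1"
      by (intro divide_left_mono) (use elim(2,3) in linarith)+
    moreover have "ln (ln (real T)) \<le> 4 * real K"
      unfolding K_def lnln_scale_def by linarith
    ultimately show ?case
      using \<open>3 \<le> K\<close> by (simp add: K_def)
  qed
qed

theorem theorem4p1:
  "\<exists>\<kappa>::real. \<kappa> > 0 \<and> (\<exists>T0::nat. \<forall>T\<ge>T0. \<forall>A::sp_alg.
     \<exists>v::nat \<Rightarrow> real. v 0 \<in> {0..1} \<and> v 1 \<in> {0..1} \<and>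
       regret A (\<lambda>_. 0) v 1 2 T \<ge> \<kappa> * (ln (ln (real T)) / ln (ln (ln (ln (real T))))))"
proof -
  obtain T0 where T0: "\<And>T. T0 \<le> T \<Longrightarrow> 1 \<le> lnln_scale T
     \<and> real ((32 * lnln_scale T) ^ 2 ^ lnln_scale T) \<le> real T / 2
     \<and> ln (ln (real T)) / ln (ln (ln (ln (real T)))) \<le> 4 * real (lnln_scale T)"
    using eventually_lnln_scale unfolding eventually_sequentially by blast
  have "\<exists>v. v 0 \<in> {0..1} \<and> v 1 \<in> {0..1} \<and>
      1/8 * (ln (ln (real T)) / ln (ln (ln (ln (real T))))) \<le> regret A (\<lambda>_. 0) v 1 2 T"
    if "T0 \<le> T" for T A
    using T0[OF that] exists_values_regret_ge_half_scale[of "lnln_scale T" T A] by fastforce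
  then show ?thesis
    by (intro exI[of _ "1/8"] conjI exI[of _ T0]) auto
qed

end
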